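(* Let $q=3^m$ with $m\ge2$ and $a\in\mathbb{F}_q^*$. Then $H_3(a)=H(a)+1$.
   Context: $\mathbb{F}_q\subset\mathbb{F}_{q^3}$. $\mathrm{Tr}$ is the absolute trace $\mathbb{F}_q\to\mathbb{F}_3$ and $\mathrm{Tr}_{q^3\to q}(x)=x+x^q+x^{q^2}$. With $\omega=e^{2\pi i/3}$, $K(a)=\sum_{x\in\mathbb{F}_q}\omega^{\mathrm{Tr}(x+a/x)}$ and $K_3(a)=\sum_{x\in\mathbb{F}_{q^3}}\omega^{\mathrm{Tr}(\mathrm{Tr}_{q^3\to q}(x+a/x))}$, where $a/x=a\,x^{Q-2}$ in a field of order $Q$. $H(a)$ (resp. $H_3(a)$) is the largest $k$ with $3^k\mid K(a)$ (resp. $3^k\mid K_3(a)$), with the convention $H(a)=m$ if $K(a)=0$ and $H_3(a)=3m$ if $K_3(a)=0$. *)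

theory Defs
  imports Complex_Main
begin

text \<open>The ambient field is a finite field of order Q = q^3 = 3^(3m) (a type 'a);
  F_q is its unique subfield of order q = 3^m, namely the roots of x^q = x.\<close>

definition omega :: complex where
  "omega = cis (2 * pi / 3)"

definition chi3 :: "'a::field \<Rightarrow> complex" where
  "chi3 t = omega ^ (THE k::nat. k < 3 \<and> of_nat k = t)"

definition Fq :: "nat \<Rightarrow> 'a::field set" where
  "Fq m = {x. x ^ (3 ^ m) = x}"

definition abs_tr :: "nat \<Rightarrow> 'a::field \<Rightarrow> 'a" where
  "abs_tr m y = (\<Sum>i<m. y ^ (3 ^ i))"

definition rel_tr :: "nat \<Rightarrow> 'a::field \<Rightarrow> 'a" where
  "rel_tr q x = x + x ^ q + x ^ (q ^ 2)"

text \<open>K(a): sum over F_q, with a/x = a x^(q-2).\<close>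
definition Kl :: "nat \<Rightarrow> 'a::{field,finite} \<Rightarrow> complex" where
  "Kl m a = (\<Sum>x\<in>Fq m. chi3 (abs_tr m (x + a * x ^ (3 ^ m - 2))))"

text \<open>K_3(a): sum over F_{q^3} (the whole type), with a/x = a x^(q^3-2).\<close>
definition Kl3 :: "nat \<Rightarrow> 'a::{field,finite} \<Rightarrow> complex" where
  "Kl3 m a = (\<Sum>x\<in>UNIV. chi3 (abs_tr m (rel_tr (3 ^ m) (x + a * x ^ (3 ^ (3 * m) - 2)))))"

definition pow3_dvd :: "nat \<Rightarrow> complex \<Rightarrow> bool" where
  "pow3_dvd k z \<longleftrightarrow> (\<exists>u v :: int. z = 3 ^ k * (of_int u + of_int v * omega))"

definition H :: "nat \<Rightarrow> 'a::{field,finite} \<Rightarrow> nat" where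
  "H m a = (if Kl m a = 0 then m else (GREATEST k. pow3_dvd k (Kl m a)))"

definition H3 :: "nat \<Rightarrow> 'a::{field,finite} \<Rightarrow> nat" where
  "H3 m a = (if Kl3 m a = 0 then 3 * m else (GREATEST k. pow3_dvd k (Kl3 m a)))"

end

theory Submission
  imports Defs "HOL-Number_Theory.Residues" "HOL-Computational_Algebra.Polynomial"
begin

text \<open>Write K(a) = 1 + S and K3(a) = 1 + S3, where S sums \<psi>(x + a/x) over the nonzero x in F_q and
  S3 sums \<psi>(T t + a T(1/t)) over the nonzero t of the field of order q^3, T being the relative trace.
  Expanding S^3 and S3 and grouping the terms by the monic cubic over F_q whose roots are the three
  summation variables, resp. the conjugates of t, turns both into weighted sums over cubics; comparing
  how often each cubic occurs gives S3 = S^3 - 3qS, that is K3 = 1 + (K - 1)^3 - 3q(K - 1). Counting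
  the values of the absolute trace shows that K is a rational integer divisible by 3 with |K| < q.
  For such K \<noteq> 0 the right-hand side is 3K plus a multiple of 3^(v+2), v being the 3-adic valuation
  of K, so its valuation is v + 1; for K = 0 it equals 3q.\<close>

section \<open>Finite fields and roots of polynomials\<close>

text \<open>The library version finite_field_power_card_eq_same needs the type class finite_field, which a
  type variable of sort {field, finite} is not known to belong to.\<close>

lemma field_power_card_eq:
  fixes x :: "'a::{field,finite}"
  shows "x ^ card (UNIV :: 'a set) = x"
proof (cases "x = 0")
  case False
  let ?U = "UNIV - {0::'a}"
  have "x ^ card ?U * \<Prod>?U = (\<Prod>y\<in>?U. x * y)"
    by (simp add: prod.distrib)
  also have "\<dots> = \<Prod>?U"
    by (rule prod.reindex_bij_witness[of _ "\<lambda>y. y / x" "\<lambda>y. x * y"]) (use False in auto)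
  finally have "x ^ card ?U = 1"
    by (simp add: prod_zero_iff)
  moreover have "card (UNIV :: 'a set) = Suc (card ?U)"
    using finite_UNIV_card_ge_0[where 'a='a] by (simp add: card_Diff_singleton)
  then have "x ^ card (UNIV :: 'a set) = x * x ^ card ?U"
    by (simp only: power_Suc)
  ultimately show ?thesis
    by (simp only: mult_1_right)
qed (use finite_UNIV_card_ge_0[where 'a='a] in auto)

lemma power_minus_2_eq_inverse:
  fixes x :: "'a::field"
  assumes "x ^ n = x" and "n > 2"
  shows "x ^ (n - 2) = inverse x"
proof (cases "x = 0")
  case False
  have "x * (x * x ^ (n - 2)) = x ^ ((n - 2) + 2)"
    by (simp only: power_add power2_eq_square mult_ac)
  also have "\<dots> = x * 1"
  proof -
    have "n - 2 + 2 = n"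
      using assms(2) by simp
    then show ?thesis
      by (simp only: assms(1) mult_1_right)
  qed
  finally have "x * x ^ (n - 2) = 1"
    by (rule mult_left_cancel[OF False, THEN iffD1])
  then show ?thesis
    by (rule inverse_unique[symmetric])
qed (use assms in simp)

lemma card_roots_monic_le:
  fixes r :: "'a::field poly"
  assumes "degree r < n"
  shows "card {x. x ^ n + poly r x = 0} \<le> n"
proof -
  let ?p = "monom 1 n + r"
  have deg: "degree ?p = n"
    using assms by (subst degree_add_eq_left) (simp_all add: degree_monom_eq)
  then have "?p \<noteq> 0"
    using assms by auto
  then have "card {x. poly ?p x = 0} \<le> degree ?p"
    by (rule card_poly_roots_bound)
  then show ?thesis
    by (simp add: deg poly_monom)
qed

lemma degree_sum_monom_3_power_less: "degree (\<Sum>i<k. monom (1::'a::field) (3 ^ i)) < 3 ^ k"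
proof (induction k)
  case (Suc k)
  have "degree (\<Sum>i<Suc k. monom (1::'a) (3 ^ i))
      \<le> max (degree (\<Sum>i<k. monom (1::'a) (3 ^ i))) (degree (monom (1::'a) (3 ^ k)))"
    by (simp add: degree_add_le_max)
  also have "\<dots> \<le> 3 ^ k"
    using Suc by (simp add: degree_monom_eq)
  also have "\<dots> < 3 ^ Suc k"
    by simp
  finally show ?case .
qed simp

lemma card_abs_tr_kernel_le:
  assumes "m \<ge> 1"
  shows "card {x::'a::field. abs_tr m x = 0} \<le> 3 ^ (m - 1)"
proof -
  have "abs_tr m x = x ^ 3 ^ (m - 1) + poly (\<Sum>i<m - 1. monom 1 (3 ^ i)) x" for x :: 'a
    using assms by (cases m) (simp_all add: abs_tr_def poly_sum poly_monom add.commute)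
  then show ?thesis
    using card_roots_monic_le[OF degree_sum_monom_3_power_less] by simp
qed

lemma cube_eq_self_imp_mem:
  fixes y :: "'a::field"
  assumes "y ^ 3 = y"
  shows "y \<in> {0, 1, -1}"
proof -
  have "y * (y - 1) * (y + 1) = 0"
    using assms by (simp add: algebra_simps power3_eq_cube)
  then show ?thesis
    by (auto simp: add_eq_0_iff2)
qed

section \<open>The cube root of unity and the character on the prime field\<close>

lemma omega_cube: "omega ^ 3 = 1"
  unfolding omega_def by (simp add: DeMoivre)

lemma omega_power_mod_3: "omega ^ (k mod 3) = omega ^ k"
proof -
  have "omega ^ k = omega ^ (3 * (k div 3) + k mod 3)"
    by simp
  also have "\<dots> = (omega ^ 3) ^ (k div 3) * omega ^ (k mod 3)"
    by (simp only: power_add power_mult)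
  finally show ?thesis
    by (simp add: omega_cube)
qed

lemma Im_omega_neq_0: "Im omega \<noteq> 0"
proof -
  have "sin (2 * pi / 3) > 0"
    by (rule sin_gt_zero) auto
  then show ?thesis
    unfolding omega_def by simp
qed

lemma omega_neq_1: "omega \<noteq> 1"
  using Im_omega_neq_0 by auto

lemma omega_squared_neq_1: "omega ^ 2 \<noteq> 1"
proof
  assume "omega ^ 2 = 1"
  then have "omega ^ 3 = omega"
    by (simp add: power3_eq_cube power2_eq_square)
  with omega_cube omega_neq_1 show False
    by simp
qed

lemma omega_sum_eq_0: "1 + omega + omega ^ 2 = 0"
proof -
  have "(omega - 1) * (1 + omega + omega ^ 2) = omega ^ 3 - 1"
    by (simp add: algebra_simps power2_eq_square power3_eq_cube)
  then show ?thesis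
    using omega_cube omega_neq_1 by simp
qed

context
  assumes char3: "CHAR('a::field) = 3"
begin

lemma power_3_power_add: "(x + y :: 'a) ^ 3 ^ k = x ^ 3 ^ k + y ^ 3 ^ k"
  by (rule freshmans_dream') (simp_all add: char3)

lemma of_nat_eq_of_nat_iff_mod_3: "(of_nat i :: 'a) = of_nat j \<longleftrightarrow> i mod 3 = j mod 3"
  using of_nat_eq_iff_cong_CHAR[where 'a='a] char3 by (simp add: cong_def)

lemma chi3_of_nat: "chi3 (of_nat k :: 'a) = omega ^ k"
proof -
  have "(THE j::nat. j < 3 \<and> of_nat j = (of_nat k :: 'a)) = k mod 3"
    by (rule the_equality) (auto simp: of_nat_eq_of_nat_iff_mod_3)
  then show ?thesis
    by (simp add: chi3_def omega_power_mod_3)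
qed

lemma minus_one_eq_2: "(-1 :: 'a) = 2"
proof (rule add.inverse_unique)
  have "(3 :: 'a) = 0"
    using of_nat_CHAR[where 'a='a] unfolding char3 by simp
  moreover have "1 + (2 :: 'a) = 3"
    by simp
  ultimately show "1 + (2 :: 'a) = 0"
    by simp
qed

lemma one_neq_minus_one: "(1 :: 'a) \<noteq> -1"
  using of_nat_eq_of_nat_iff_mod_3[of 1 2] by (simp add: minus_one_eq_2)

lemma prime_field_eq: "{0, 1, -1 :: 'a} = of_nat ` {0, 1, 2}"
  by (simp add: minus_one_eq_2)

lemma chi3_0: "chi3 (0 :: 'a) = 1"
  and chi3_1: "chi3 (1 :: 'a) = omega"
  and chi3_minus_1: "chi3 (-1 :: 'a) = omega ^ 2"
  using chi3_of_nat[of 0] chi3_of_nat[of 1] chi3_of_nat[of 2] by (simp_all add: minus_one_eq_2)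

lemma chi3_add:
  assumes "s \<in> {0, 1, -1 :: 'a}" and "t \<in> {0, 1, -1 :: 'a}"
  shows "chi3 (s + t) = chi3 s * chi3 t"
proof -
  obtain i j where "s = of_nat i" "t = of_nat j"
    using assms unfolding prime_field_eq by blast
  then show ?thesis
    by (simp add: chi3_of_nat power_add flip: of_nat_add)
qed

lemma abs_tr_add: "abs_tr m (x + y :: 'a) = abs_tr m x + abs_tr m y"
  by (simp add: abs_tr_def power_3_power_add sum.distrib)

lemma abs_tr_minus: "abs_tr m (- x :: 'a) = - abs_tr m x"
  by (simp add: abs_tr_def power_minus_odd sum_negf)

lemma abs_tr_in_prime_field:
  assumes "(y :: 'a) ^ 3 ^ m = y"
  shows "abs_tr m y \<in> {0, 1, -1}"
proof (rule cube_eq_self_imp_mem)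
  have "abs_tr m y ^ 3 = (\<Sum>i<m. (y ^ 3 ^ i) ^ 3)"
    unfolding abs_tr_def by (rule freshmans_dream_sum) (simp_all add: char3)
  also have "\<dots> = (\<Sum>i<m. y ^ 3 ^ Suc i)"
    by (simp only: power_Suc2 power_mult)
  also have "\<dots> = abs_tr m y"
  proof -
    have "(\<Sum>i<Suc m. y ^ 3 ^ i) = y + (\<Sum>i<m. y ^ 3 ^ Suc i)"
      using sum.lessThan_Suc_shift[of "\<lambda>i. y ^ 3 ^ i" m] by simp
    moreover have "(\<Sum>i<Suc m. y ^ 3 ^ i) = abs_tr m y + y"
      using assms by (simp add: abs_tr_def)
    ultimately show ?thesis
      by (metis add.commute add_left_cancel)
  qed
  finally show "abs_tr m y ^ 3 = abs_tr m y" .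
qed

end

section \<open>Monic cubics\<close>

definition elem_sym :: "'a::comm_ring_1 \<times> 'a \<times> 'a \<Rightarrow> 'a \<times> 'a \<times> 'a" where
  "elem_sym p = (case p of (x, y, z) \<Rightarrow> (x + y + z, x * y + y * z + z * x, x * y * z))"

definition cubic :: "'a::comm_ring_1 \<times> 'a \<times> 'a \<Rightarrow> 'a \<Rightarrow> 'a" where
  "cubic w X = (case w of (u, e, n) \<Rightarrow> X ^ 3 - u * X ^ 2 + e * X - n)"

lemma cubic_elem_sym: "cubic (elem_sym (x, y, z)) X = (X - x) * (X - y) * (X - z)"
  by (simp add: cubic_def elem_sym_def algebra_simps power2_eq_square power3_eq_cube)

lemma cubic_eq_0_iff_elem_sym: "cubic (elem_sym (x, y, z)) X = 0 \<longleftrightarrow> X \<in> {x, y, z}"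
  for x y z X :: "'a::idom"
  by (auto simp: cubic_elem_sym)

lemma elem_sym_of_two_roots:
  fixes r1 r2 :: "'a::field"
  assumes "cubic w r1 = 0" and "cubic w r2 = 0" and "r1 \<noteq> r2"
  shows "w = elem_sym (r1, r2, fst w - r1 - r2)"
proof -
  obtain u e n where w: "w = (u, e, n)"
    by (cases w) auto
  have "(r1 - r2) * (r1 ^ 2 + r1 * r2 + r2 ^ 2 - u * (r1 + r2) + e) = cubic w r1 - cubic w r2"
    by (simp add: w cubic_def algebra_simps power2_eq_square power3_eq_cube)
  with assms have "r1 ^ 2 + r1 * r2 + r2 ^ 2 - u * (r1 + r2) + e = 0"
    by simp
  then have e: "e = u * (r1 + r2) - r1 ^ 2 - r1 * r2 - r2 ^ 2"
    by (simp add: algebra_simps)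
  have "n = r1 ^ 3 - u * r1 ^ 2 + e * r1"
    using assms(1) by (simp add: w cubic_def)
  then have "n = r1 * r2 * (u - r1 - r2)"
    unfolding e by (simp add: algebra_simps power2_eq_square power3_eq_cube)
  with e show ?thesis
    by (simp add: w elem_sym_def algebra_simps power2_eq_square)
qed

lemma cubic_eq_0_iff:
  fixes r :: "'a::field"
  assumes "r \<noteq> 0"
  shows "cubic (u, e, n) r = 0 \<longleftrightarrow> e = (n - r ^ 3 + u * r ^ 2) / r"
proof -
  have "cubic (u, e, n) r = (e - (n - r ^ 3 + u * r ^ 2) / r) * r"
    using assms by (simp add: cubic_def field_simps power2_eq_square power3_eq_cube)
  with assms show ?thesis
    by simp
qed

section \<open>Counting and 3-adic valuations\<close>

lemma card_UNIV_eq_card_range_times_card_kernel: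
  fixes f :: "'b::{ab_group_add,finite} \<Rightarrow> 'c::ab_group_add"
  assumes add: "\<And>x y. f (x + y) = f x + f y"
  shows "card (UNIV :: 'b set) = card (range f) * card {x. f x = 0}"
proof -
  have fibre: "card {x. f x = f x0} = card {x. f x = 0}" for x0
  proof (rule bij_betw_same_card[of "\<lambda>x. x - x0"], rule bij_betw_byWitness[of _ "\<lambda>x. x + x0"])
    have "f (x - x0) = f x - f x0" for x
      using add[of "x - x0" x0] by (simp add: algebra_simps)
    then show "(\<lambda>x. x - x0) ` {x. f x = f x0} \<subseteq> {x. f x = 0}"
      by auto
    show "(\<lambda>x. x + x0) ` {x. f x = 0} \<subseteq> {x. f x = f x0}"
      using add by auto
  qed simp_all
  have "card (UNIV :: 'b set) = (\<Sum>y\<in>range f. card {x. f x = y})"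
    using sum.group[of UNIV "range f" f "\<lambda>_. 1::nat"] by simp
  also have "\<dots> = (\<Sum>y\<in>range f. card {x. f x = 0})"
    using fibre by (intro sum.cong) auto
  finally show ?thesis
    by simp
qed

lemma sum_comp_eq_sum_card_fibres:
  fixes g :: "'b \<Rightarrow> 'c::comm_semiring_1"
  assumes "finite A" and "finite B" and "f ` A \<subseteq> B"
  shows "(\<Sum>x\<in>A. g (f x)) = (\<Sum>y\<in>B. of_nat (card {x\<in>A. f x = y}) * g y)"
proof -
  have "(\<Sum>x\<in>A. g (f x)) = (\<Sum>y\<in>B. \<Sum>x\<in>{x\<in>A. f x = y}. g (f x))"
    using sum.group[OF assms, of "\<lambda>x. g (f x)"] by simp
  also have "\<dots> = (\<Sum>y\<in>B. \<Sum>x\<in>{x\<in>A. f x = y}. g y)"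
    by (intro sum.cong) auto
  finally show ?thesis
    by simp
qed

lemma card_eq_sum_card_fibres:
  assumes "finite A" and "finite B" and "f ` A \<subseteq> B"
  shows "card A = (\<Sum>y\<in>B. card {x\<in>A. f x = y})"
  using sum_comp_eq_sum_card_fibres[OF assms, of "\<lambda>_. 1 :: nat"] by simp

lemma sum_mono_eq_imp_eq:
  fixes f g :: "'b \<Rightarrow> 'c::ordered_cancel_comm_monoid_add"
  assumes "finite A" and "\<And>x. x \<in> A \<Longrightarrow> f x \<le> g x" and "sum f A = sum g A" and "x \<in> A"
  shows "f x = g x"
  using sum_strict_mono_ex1[of A f g] assms order_le_neq_trans by fastforce

lemma card_permutations_ge:
  assumes "x \<noteq> y"
  shows "3 * card {x, y, z} \<le> card {(x, y, z), (y, z, x), (z, x, y), (y, x, z), (x, z, y), (z, y, x)} + 3"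
proof -
  consider "z = x" | "z = y" | "z \<noteq> x" "z \<noteq> y"
    by blast
  then show ?thesis
    by cases (use assms in \<open>simp_all add: card_insert_if\<close>)
qed

lemma card_nonzero_solutions_add_divide_le:
  fixes c y :: "'a::field"
  shows "card {x. x \<noteq> 0 \<and> x + c / x = y} \<le> 2"
proof -
  let ?p = "[:c, - y, 1:]"
  have "{x. x \<noteq> 0 \<and> x + c / x = y} \<subseteq> {x. poly ?p x = 0}"
    by (auto simp: field_simps power2_eq_square)
  moreover have "finite {x. poly ?p x = 0}"
    by (rule poly_roots_finite) simp
  ultimately have "card {x. x \<noteq> 0 \<and> x + c / x = y} \<le> card {x. poly ?p x = 0}"
    by (simp add: card_mono)
  also have "\<dots> \<le> degree ?p"
    by (rule card_poly_roots_bound) simp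
  finally show ?thesis
    by simp
qed

lemma cubic_count_identity:
  fixes Q :: nat
  assumes "Q \<ge> 1"
  shows "(Q ^ 3 - 1) + 3 * ((Q - 1) * (Q * (Q - 1))) = (Q - 1) ^ 3 + 3 * (Q * (Q * (Q - 1)))"
  using assms by (cases Q) (simp_all add: algebra_simps power3_eq_cube)

lemma pow3_dvd_of_int_iff: "pow3_dvd k (of_int z) \<longleftrightarrow> (3 :: int) ^ k dvd z"
proof
  assume "pow3_dvd k (of_int z)"
  then obtain u v :: int where uv: "of_int z = 3 ^ k * (of_int u + of_int v * omega)"
    unfolding pow3_dvd_def by blast
  then have "Im (of_int z :: complex) = 3 ^ k * (of_int v * Im omega)"
    using arg_cong[OF uv, of Im] by simp
  then have "v = 0"
    using Im_omega_neq_0 by simp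
  with uv have "(of_int z :: complex) = of_int (3 ^ k * u)"
    by simp
  then have "z = 3 ^ k * u"
    by (simp only: of_int_eq_iff)
  then show "(3 :: int) ^ k dvd z"
    by (rule dvdI)
next
  assume "(3 :: int) ^ k dvd z"
  then obtain c where "z = 3 ^ k * c"
    by (auto elim: dvdE)
  then show "pow3_dvd k (of_int z)"
    unfolding pow3_dvd_def by (intro exI[of _ c] exI[of _ 0]) simp
qed

lemma Greatest_pow3_dvd_of_int:
  assumes "z \<noteq> 0"
  shows "(GREATEST k. pow3_dvd k (of_int z)) = multiplicity 3 z"
proof (rule Greatest_equality)
  show "pow3_dvd (multiplicity 3 z) (of_int z)"
    by (simp add: pow3_dvd_of_int_iff multiplicity_dvd)
  show "k \<le> multiplicity 3 z" if "pow3_dvd k (of_int z)" for k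
    using that assms by (simp add: pow3_dvd_of_int_iff power_dvd_iff_le_multiplicity)
qed

lemma cube_shift_remainder_dvd:
  fixes k :: int
  assumes dvd_k: "3 ^ v dvd k" and "1 \<le> v" and "v < m"
  shows "3 ^ (v + 2) dvd k ^ 3 - 3 * k ^ 2 - 3 * 3 ^ m * k + 3 * 3 ^ m"
proof (intro dvd_add dvd_diff)
  have "(3 :: int) ^ (v + 2) dvd 3 ^ (3 * v)"
    by (rule le_imp_power_dvd) (use \<open>1 \<le> v\<close> in simp)
  also have "\<dots> dvd k ^ 3"
    using dvd_power_same[OF dvd_k, of 3] by (simp add: power_mult mult.commute[of 3 v])
  finally show "3 ^ (v + 2) dvd k ^ 3" .
  have "(3 :: int) ^ (v + 2) dvd 3 * 3 ^ (2 * v)"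
    using \<open>1 \<le> v\<close> by (simp add: le_imp_power_dvd flip: power_Suc)
  also have "\<dots> dvd 3 * k ^ 2"
    using dvd_power_same[OF dvd_k, of 2] by (simp add: power_mult mult.commute[of 2 v])
  finally show "3 ^ (v + 2) dvd 3 * k ^ 2" .
  show "(3 :: int) ^ (v + 2) dvd 3 * 3 ^ m"
    using \<open>v < m\<close> by (simp add: le_imp_power_dvd flip: power_Suc)
  then show "3 ^ (v + 2) dvd 3 * 3 ^ m * k"
    by (rule dvd_mult2)
qed

lemma multiplicity_3_cube_shift:
  fixes k :: int
  assumes "k \<noteq> 0" and "3 dvd k" and "\<not> 3 ^ m dvd k"
  shows "multiplicity 3 (1 + (k - 1) ^ 3 - 3 * 3 ^ m * (k - 1)) = Suc (multiplicity 3 k)"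
proof -
  define v where "v = multiplicity 3 k"
  have dvd_k: "3 ^ v dvd k"
    by (simp add: v_def multiplicity_dvd)
  have "1 \<le> v"
    using assms(1,2) by (simp add: v_def multiplicity_gt_zero_iff Suc_le_eq)
  have "v < m"
  proof (rule ccontr)
    assume "\<not> v < m"
    then have "(3 :: int) ^ m dvd 3 ^ v"
      by (simp add: le_imp_power_dvd)
    with dvd_k assms(3) show False
      using dvd_trans by blast
  qed
  define R where "R = k ^ 3 - 3 * k ^ 2 - 3 * 3 ^ m * k + 3 * 3 ^ m"
  have split: "1 + (k - 1) ^ 3 - 3 * 3 ^ m * (k - 1) = 3 * k + R"
    by (simp add: R_def algebra_simps power2_eq_square power3_eq_cube)
  have mult_3k: "multiplicity 3 (3 * k) = Suc v"
    using assms(1) by (simp add: v_def multiplicity_times_same)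
  show ?thesis
  proof (cases "R = 0")
    case False
    have "v + 2 \<le> multiplicity 3 R"
      using cube_shift_remainder_dvd[OF dvd_k \<open>1 \<le> v\<close> \<open>v < m\<close>] False
      unfolding R_def by (intro multiplicity_geI) simp_all
    then show ?thesis
      unfolding split using assms(1) False mult_3k
      by (simp add: multiplicity_sum_lt v_def)
  qed (simp add: split mult_3k v_def)
qed

lemma H_eq_multiplicity:
  assumes "Kl m a = of_int z" and "z \<noteq> 0"
  shows "H m a = multiplicity 3 z"
  using assms by (simp add: H_def Greatest_pow3_dvd_of_int)

lemma H3_eq_multiplicity:
  assumes "Kl3 m a = of_int z" and "z \<noteq> 0"
  shows "H3 m a = multiplicity 3 z"
  using assms by (simp add: H3_def Greatest_pow3_dvd_of_int)

lemma H3_eq_H_plus_1_of_int: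
  assumes Kl: "Kl m a = of_int k" and "3 dvd k" and "\<bar>k\<bar> < 3 ^ m"
    and Kl3: "Kl3 m a = of_int (1 + (k - 1) ^ 3 - 3 * 3 ^ m * (k - 1))"
  shows "H3 m a = H m a + 1"
proof (cases "k = 0")
  case True
  then have "H3 m a = multiplicity 3 ((3 :: int) ^ Suc m)"
    using H3_eq_multiplicity[OF Kl3] by simp
  then have "H3 m a = Suc m"
    by (simp only: multiplicity_same_power') simp
  moreover have "H m a = m"
    using Kl True by (simp add: H_def)
  ultimately show ?thesis
    by simp
next
  case False
  have "\<not> 3 ^ m dvd k"
    using \<open>\<bar>k\<bar> < 3 ^ m\<close> False by (auto dest: dvd_imp_le_int)
  then have "multiplicity 3 (1 + (k - 1) ^ 3 - 3 * 3 ^ m * (k - 1)) = Suc (multiplicity 3 k)"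
    using False \<open>3 dvd k\<close> by (intro multiplicity_3_cube_shift)
  moreover from this have "1 + (k - 1) ^ 3 - 3 * 3 ^ m * (k - 1) \<noteq> 0"
    by auto
  ultimately show ?thesis
    using H_eq_multiplicity[OF Kl False] H3_eq_multiplicity[OF Kl3] by simp
qed

section \<open>The Kloosterman sums\<close>

definition psi :: "nat \<Rightarrow> 'a::field \<Rightarrow> complex" where
  "psi m y = chi3 (abs_tr m y)"

locale kloosterman =
  fixes m :: nat and a :: "'a::{field,finite}"
  assumes card_UNIV: "card (UNIV :: 'a set) = 3 ^ (3 * m)"
    and m_ge_2: "2 \<le> m"
    and a_in_Fq: "a \<in> Fq m"
    and a_nonzero: "a \<noteq> 0"
begin

abbreviation q :: nat where
  "q \<equiv> 3 ^ m"

abbreviation Fq_star :: "'a set" where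
  "Fq_star \<equiv> Fq m - {0}"

lemma CHAR_eq_3: "CHAR('a) = 3"
proof (rule primes_dvd_imp_eq)
  show "prime CHAR('a)"
    by (rule prime_CHAR_semidom) (simp add: finite_imp_CHAR_pos)
  moreover have "CHAR('a) dvd 3 ^ (3 * m)"
    using CHAR_dvd_CARD[where 'a='a] card_UNIV by simp
  ultimately show "CHAR('a) dvd 3"
    by (rule prime_dvd_power)
qed simp

lemma q_ge_9: "9 \<le> q"
  using power_increasing[of 2 m "3 :: nat"] m_ge_2 by simp

lemma power_q_power_add: "(x + y :: 'a) ^ q ^ j = x ^ q ^ j + y ^ q ^ j"
  using power_3_power_add[OF CHAR_eq_3, of x y "m * j"] by (simp add: power_mult)

lemma power_q_add: "(x + y :: 'a) ^ q = x ^ q + y ^ q"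
  using power_q_power_add[of x y 1] by simp

lemma power_q_cube: "(x :: 'a) ^ q ^ 3 = x"
  using field_power_card_eq[of x] card_UNIV by (simp add: mult.commute[of 3 m] power_mult)

lemma mem_Fq_iff: "(x :: 'a) \<in> Fq m \<longleftrightarrow> x ^ q = x"
  by (simp add: Fq_def)

lemma Fq_power_q_power:
  assumes "(x :: 'a) \<in> Fq m"
  shows "x ^ q ^ j = x"
proof (induction j)
  case (Suc j)
  have "x ^ q ^ Suc j = (x ^ q ^ j) ^ q"
    by (simp only: power_Suc2 power_mult)
  with Suc assms show ?case
    by (simp add: mem_Fq_iff)
qed simp

lemma zero_in_Fq: "(0 :: 'a) \<in> Fq m"
  by (simp add: mem_Fq_iff)

lemma Fq_add: "(x :: 'a) \<in> Fq m \<Longrightarrow> y \<in> Fq m \<Longrightarrow> x + y \<in> Fq m"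
  using power_q_add[of x y] by (simp add: mem_Fq_iff)

lemma Fq_uminus: "(x :: 'a) \<in> Fq m \<Longrightarrow> - x \<in> Fq m"
  by (simp add: mem_Fq_iff power_minus_odd)

lemma Fq_diff: "(x :: 'a) \<in> Fq m \<Longrightarrow> y \<in> Fq m \<Longrightarrow> x - y \<in> Fq m"
  using Fq_add[of x "- y"] Fq_uminus[of y] by simp

lemma Fq_mult: "(x :: 'a) \<in> Fq m \<Longrightarrow> y \<in> Fq m \<Longrightarrow> x * y \<in> Fq m"
  by (simp add: mem_Fq_iff power_mult_distrib)

lemma Fq_inverse: "(x :: 'a) \<in> Fq m \<Longrightarrow> inverse x \<in> Fq m"
  by (simp add: mem_Fq_iff power_inverse)

lemma Fq_divide: "(x :: 'a) \<in> Fq m \<Longrightarrow> y \<in> Fq m \<Longrightarrow> x / y \<in> Fq m"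
  by (simp add: divide_inverse Fq_mult Fq_inverse)

lemma Fq_power: "(x :: 'a) \<in> Fq m \<Longrightarrow> x ^ k \<in> Fq m"
proof -
  have "(x ^ k) ^ q = (x ^ q) ^ k"
    by (simp only: mult.commute flip: power_mult)
  then show "x \<in> Fq m \<Longrightarrow> x ^ k \<in> Fq m"
    by (simp add: mem_Fq_iff)
qed

lemma power_q_power_q: "((x :: 'a) ^ q) ^ q = x ^ q ^ 2"
  by (simp add: power2_eq_square flip: power_mult)

lemma power_q_square_power_q: "((x :: 'a) ^ q ^ 2) ^ q = x"
  using power_q_cube[of x] by (simp add: power2_eq_square power3_eq_cube flip: power_mult)

lemma rel_tr_in_Fq: "rel_tr q (x :: 'a) \<in> Fq m"
  unfolding mem_Fq_iff rel_tr_def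
  by (simp add: power_q_add power_q_power_q power_q_square_power_q)

lemma rel_tr_add: "rel_tr q (x + y :: 'a) = rel_tr q x + rel_tr q y"
  using power_q_add[of x y] power_q_power_add[of x y 2] by (simp add: rel_tr_def)

lemma rel_tr_mult_Fq: "(c :: 'a) \<in> Fq m \<Longrightarrow> rel_tr q (c * x) = c * rel_tr q x"
  using Fq_power_q_power[of c 1] Fq_power_q_power[of c 2]
  by (simp add: rel_tr_def power_mult_distrib algebra_simps)

lemma card_rel_tr_kernel_le: "card {x :: 'a. rel_tr q x = 0} \<le> q ^ 2"
proof -
  have "{x :: 'a. rel_tr q x = 0} = {x. x ^ q ^ 2 + poly (monom 1 q + [:0, 1:]) x = 0}"
    by (auto simp: rel_tr_def poly_monom algebra_simps)
  also have "card \<dots> \<le> q ^ 2"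
  proof (rule card_roots_monic_le)
    have "degree (monom (1 :: 'a) q + [:0, 1:]) = q"
      using q_ge_9 by (subst degree_add_eq_left) (auto simp: degree_monom_eq)
    then show "degree (monom (1 :: 'a) q + [:0, 1:]) < q ^ 2"
      using q_ge_9 by (simp add: power2_eq_square)
  qed
  finally show ?thesis .
qed

lemma card_Fq: "card (Fq m :: 'a set) = q"
proof (rule antisym)
  have "Fq m = {x :: 'a. x ^ q + poly [:0, -1:] x = 0}"
    by (auto simp: mem_Fq_iff)
  then show "card (Fq m :: 'a set) \<le> q"
    using card_roots_monic_le[of "[:0, -1:]" q] q_ge_9 by simp
  have "q ^ 3 = card (range (rel_tr q :: 'a \<Rightarrow> 'a)) * card {x :: 'a. rel_tr q x = 0}"
    using card_UNIV_eq_card_range_times_card_kernel[OF rel_tr_add] card_UNIV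
    by (simp add: power_mult mult.commute[of 3 m])
  also have "\<dots> \<le> card (range (rel_tr q :: 'a \<Rightarrow> 'a)) * q ^ 2"
    using card_rel_tr_kernel_le by simp
  finally have "q \<le> card (range (rel_tr q :: 'a \<Rightarrow> 'a))"
    by (simp add: power2_eq_square power3_eq_cube)
  also have "\<dots> \<le> card (Fq m :: 'a set)"
    by (intro card_mono) (auto simp: rel_tr_in_Fq)
  finally show "q \<le> card (Fq m :: 'a set)" .
qed

lemma abs_tr_Fq_in_prime_field: "(y :: 'a) \<in> Fq m \<Longrightarrow> abs_tr m y \<in> {0, 1, -1}"
  by (rule abs_tr_in_prime_field[OF CHAR_eq_3]) (simp add: mem_Fq_iff)

lemma psi_add: "(x :: 'a) \<in> Fq m \<Longrightarrow> y \<in> Fq m \<Longrightarrow> psi m (x + y) = psi m x * psi m y"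
  unfolding psi_def abs_tr_add[OF CHAR_eq_3]
  by (intro chi3_add[OF CHAR_eq_3] abs_tr_Fq_in_prime_field)

lemma psi_0: "psi m (0 :: 'a) = 1"
  by (simp add: psi_def abs_tr_def power_0_left chi3_0[OF CHAR_eq_3])

lemma q_gt_2: "2 < q"
  using q_ge_9 by simp

lemma finite_Fq: "finite (Fq m :: 'a set)"
  by simp

lemma sum_psi_Fq: "(\<Sum>y\<in>Fq m. psi m (y :: 'a)) = 0"
proof -
  have "card {y \<in> Fq m. abs_tr m (y :: 'a) = 0} \<le> card {y :: 'a. abs_tr m y = 0}"
    by (intro card_mono) auto
  also have "\<dots> \<le> 3 ^ (m - 1)"
    using m_ge_2 by (intro card_abs_tr_kernel_le) simp
  also have "\<dots> < card (Fq m :: 'a set)"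
    using m_ge_2 by (simp add: card_Fq)
  finally have "{y \<in> Fq m. abs_tr m (y :: 'a) = 0} \<noteq> Fq m"
    by auto
  then obtain y0 :: 'a where y0: "y0 \<in> Fq m" "abs_tr m y0 \<noteq> 0"
    by blast
  have "psi m y0 \<noteq> 1"
    using abs_tr_Fq_in_prime_field[OF y0(1)] y0(2) omega_neq_1 omega_squared_neq_1
    by (auto simp: psi_def chi3_1[OF CHAR_eq_3] chi3_minus_1[OF CHAR_eq_3])
  have "(\<Sum>y\<in>Fq m. psi m (y :: 'a)) = (\<Sum>y\<in>Fq m. psi m (y0 + y))"
    by (rule sum.reindex_bij_witness[of _ "\<lambda>y. y0 + y" "\<lambda>y. y - y0"]) (auto simp: y0 Fq_add Fq_diff)
  also have "\<dots> = psi m y0 * (\<Sum>y\<in>Fq m. psi m (y :: 'a))"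
    by (simp add: sum_distrib_left psi_add y0)
  finally have "(psi m y0 - 1) * (\<Sum>y\<in>Fq m. psi m (y :: 'a)) = 0"
    by (simp add: algebra_simps)
  with \<open>psi m y0 \<noteq> 1\<close> show ?thesis
    by simp
qed

lemma sum_psi_Fq_star: "(\<Sum>y\<in>Fq_star. psi m y) = -1"
  using sum.remove[OF finite_Fq zero_in_Fq, of "psi m"] sum_psi_Fq psi_0 by (simp add: add_eq_0_iff)

lemma card_Fq_star: "card Fq_star = q - 1"
  by (simp add: card_Fq zero_in_Fq card_Diff_singleton)

lemma sum_psi_divide:
  assumes "(b :: 'a) \<in> Fq m"
  shows "(\<Sum>n\<in>Fq_star. psi m (b / n)) = (if b = 0 then of_nat q - 1 else -1)"
proof (cases "b = 0")
  case True
  then show ?thesis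
    using q_ge_9 by (simp add: psi_0 card_Fq_star of_nat_diff)
next
  case False
  have "(\<Sum>n\<in>Fq_star. psi m (b / n)) = (\<Sum>y\<in>Fq_star. psi m y)"
    by (rule sum.reindex_bij_witness[of _ "\<lambda>y. b / y" "\<lambda>n. b / n"])
      (auto simp: assms False Fq_divide)
  also have "\<dots> = -1"
    by (rule sum_psi_Fq_star)
  finally show ?thesis
    using False by (simp only: if_not_P not_False_eq_True)
qed

lemma sum_psi_times_sum_psi_divide:
  assumes "(c :: 'a) \<in> Fq_star"
  shows "(\<Sum>v\<in>Fq m. psi m v * (\<Sum>n\<in>Fq_star. psi m (c * v / n))) = of_nat q"
proof -
  have "(\<Sum>v\<in>Fq m. psi m v * (\<Sum>n\<in>Fq_star. psi m (c * v / n)))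
      = (\<Sum>v\<in>Fq m. (if v = 0 then of_nat q else 0) - psi m (v :: 'a))"
    by (intro sum.cong refl) (use assms in \<open>auto simp: sum_psi_divide Fq_mult psi_0\<close>)
  also have "\<dots> = of_nat q"
    by (simp add: sum_subtractf sum_psi_Fq zero_in_Fq)
  finally show ?thesis .
qed

definition Kl_star :: complex where
  "Kl_star = (\<Sum>x\<in>Fq_star. psi m (x + a / x))"

definition Kl3_star :: complex where
  "Kl3_star = (\<Sum>t\<in>UNIV - {0}. psi m (rel_tr q t + a * rel_tr q (inverse t)))"

text \<open>At x = 0 both a * 0^(q - 2) and a / 0 are 0.\<close>

lemma Kl_eq_sum_psi: "Kl m a = (\<Sum>x\<in>Fq m. psi m (x + a / x))"
  unfolding Kl_def psi_def using q_gt_2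
  by (intro sum.cong refl) (simp add: divide_inverse power_minus_2_eq_inverse mem_Fq_iff)

lemma Kl_eq_1_plus: "Kl m a = 1 + Kl_star"
proof -
  have "Kl m a = (\<Sum>x\<in>Fq m. psi m (x + a / x))"
    by (rule Kl_eq_sum_psi)
  also have "\<dots> = psi m (0 + a / 0) + Kl_star"
    unfolding Kl_star_def by (rule sum.remove) (simp_all add: zero_in_Fq)
  finally show ?thesis
    by (simp add: psi_0)
qed

lemma Kl3_eq_1_plus: "Kl3 m a = 1 + Kl3_star"
proof -
  have "x ^ (3 ^ (3 * m) - 2) = inverse x" for x :: 'a
  proof (rule power_minus_2_eq_inverse)
    show "x ^ 3 ^ (3 * m) = x"
      using field_power_card_eq[of x] card_UNIV by simp
    show "2 < (3 :: nat) ^ (3 * m)"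
      using power_increasing[of 1 "3 * m" "3 :: nat"] m_ge_2 by simp
  qed
  then have "Kl3 m a = (\<Sum>t\<in>UNIV. psi m (rel_tr q t + a * rel_tr q (inverse t)))"
    unfolding Kl3_def psi_def by (simp add: rel_tr_add rel_tr_mult_Fq[OF a_in_Fq])
  also have "\<dots> = psi m (rel_tr q 0 + a * rel_tr q (inverse 0)) + Kl3_star"
    unfolding Kl3_star_def by (rule sum.remove) simp_all
  finally show ?thesis
    by (simp add: rel_tr_def power_0_left psi_0)
qed

text \<open>A triple (u, e, n) stands for the monic cubic X^3 - u X^2 + e X - n over F_q with n \<noteq> 0. If its
  roots are x, y, z then u + a e/n = (x + a/x) + (y + a/y) + (z + a/z), so the weight of the cubic is
  the product of the summands of Kl_star at its roots.\<close>

definition cubics :: "('a \<times> 'a \<times> 'a) set" where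
  "cubics = Fq m \<times> Fq m \<times> Fq_star"

definition weight :: "'a \<times> 'a \<times> 'a \<Rightarrow> complex" where
  "weight w = (case w of (u, e, n) \<Rightarrow> psi m (u + a * (e / n)))"

definition conj_coeffs :: "'a \<Rightarrow> 'a \<times> 'a \<times> 'a" where
  "conj_coeffs t = elem_sym (t, t ^ q, t ^ q ^ 2)"

definition root_triples :: "'a \<times> 'a \<times> 'a \<Rightarrow> ('a \<times> 'a \<times> 'a) set" where
  "root_triples w = {p \<in> Fq_star \<times> Fq_star \<times> Fq_star. elem_sym p = w}"

definition conj_points :: "'a \<times> 'a \<times> 'a \<Rightarrow> 'a set" where
  "conj_points w = {t \<in> UNIV - {0}. conj_coeffs t = w}"

definition Fq_roots :: "'a \<times> 'a \<times> 'a \<Rightarrow> 'a set" where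
  "Fq_roots w = {r \<in> Fq m. cubic w r = 0}"

lemma finite_cubics: "finite cubics"
  by simp

lemma card_cubics: "card cubics = q * (q * (q - 1))"
  by (simp add: cubics_def card_cartesian_product card_Fq card_Fq_star)

lemma elem_sym_in_cubics:
  assumes "x \<in> Fq_star" and "y \<in> Fq_star" and "z \<in> Fq_star"
  shows "elem_sym (x, y, z) \<in> cubics"
  using assms by (auto simp: cubics_def elem_sym_def intro!: Fq_add Fq_mult)

lemma conj_coeffs_in_cubics:
  assumes "t \<noteq> 0"
  shows "conj_coeffs t \<in> cubics"
  using assms unfolding cubics_def conj_coeffs_def elem_sym_def
  by (simp add: mem_Fq_iff power_q_add power_mult_distrib power_q_power_q power_q_square_power_q algebra_simps)

lemma cubic_conj_coeffs: "cubic (conj_coeffs t) X = (X - t) * (X - t ^ q) * (X - t ^ q ^ 2)"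
  by (simp add: conj_coeffs_def cubic_elem_sym)

lemma weight_elem_sym:
  assumes "x \<in> Fq_star" and "y \<in> Fq_star" and "z \<in> Fq_star"
  shows "weight (elem_sym (x, y, z)) = psi m (x + a / x) * psi m (y + a / y) * psi m (z + a / z)"
proof -
  have in_Fq: "v + a / v \<in> Fq m" if "v \<in> Fq_star" for v
    using that a_in_Fq by (auto intro!: Fq_add Fq_divide)
  have "weight (elem_sym (x, y, z)) = psi m ((x + a / x) + ((y + a / y) + (z + a / z)))"
    unfolding weight_def elem_sym_def prod.case
    by (rule arg_cong[where f = "psi m"]) (use assms in \<open>simp add: field_simps\<close>)
  also have "\<dots> = psi m (x + a / x) * (psi m (y + a / y) * psi m (z + a / z))"
    using assms by (simp add: psi_add in_Fq Fq_add)
  finally show ?thesis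
    by (simp only: mult.assoc)
qed

lemma weight_conj_coeffs: "weight (conj_coeffs t) = psi m (rel_tr q t + a * rel_tr q (inverse t))"
proof (cases "t = 0")
  case True
  then show ?thesis
    by (simp add: weight_def conj_coeffs_def elem_sym_def rel_tr_def power_0_left)
next
  case False
  show ?thesis
    unfolding weight_def conj_coeffs_def elem_sym_def prod.case
    by (rule arg_cong[where f = "psi m"]) (use False in \<open>simp add: rel_tr_def power_inverse field_simps\<close>)
qed

lemma Kl_star_cube: "Kl_star ^ 3 = (\<Sum>w\<in>cubics. of_nat (card (root_triples w)) * weight w)"
proof -
  let ?f = "\<lambda>x. psi m (x + a / x)"
  have "Kl_star ^ 3 = (\<Sum>x\<in>Fq_star. \<Sum>y\<in>Fq_star. \<Sum>z\<in>Fq_star. ?f x * ?f y * ?f z)"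
    by (simp add: Kl_star_def power3_eq_cube sum_distrib_left sum_distrib_right mult_ac)
  also have "\<dots> = (\<Sum>p\<in>Fq_star \<times> Fq_star \<times> Fq_star. weight (elem_sym p))"
    by (simp add: sum.cartesian_product' weight_elem_sym)
  also have "\<dots> = (\<Sum>w\<in>cubics. of_nat (card (root_triples w)) * weight w)"
    unfolding root_triples_def
    by (rule sum_comp_eq_sum_card_fibres[where f = elem_sym and g = weight]) (auto intro: elem_sym_in_cubics)
  finally show ?thesis .
qed

lemma Kl3_star_eq_sum: "Kl3_star = (\<Sum>w\<in>cubics. of_nat (card (conj_points w)) * weight w)"
  unfolding Kl3_star_def conj_points_def weight_conj_coeffs[symmetric]
  by (rule sum_comp_eq_sum_card_fibres[where f = conj_coeffs and g = weight]) (auto intro: conj_coeffs_in_cubics)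

lemma sum_weight_cubics: "(\<Sum>w\<in>cubics. weight w) = 0"
proof -
  let ?C = "\<Sum>e\<in>Fq m. \<Sum>n\<in>Fq_star. psi m (a * (e / n))"
  have "(\<Sum>w\<in>cubics. weight w) = (\<Sum>u\<in>Fq m. psi m (u :: 'a) * ?C)"
    unfolding cubics_def sum.cartesian_product' sum_distrib_left
    by (intro sum.cong refl) (auto simp: weight_def psi_add a_in_Fq Fq_mult Fq_divide)
  also have "\<dots> = (\<Sum>u\<in>Fq m. psi m (u :: 'a)) * ?C"
    by (rule sum_distrib_right[symmetric])
  finally show ?thesis
    by (simp add: sum_psi_Fq)
qed

lemma sum_over_cubics_through:
  assumes "r \<in> Fq_star"
  shows "(\<Sum>w\<in>{w \<in> cubics. cubic w r = 0}. g w)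
    = (\<Sum>(u, n)\<in>Fq m \<times> Fq_star. g (u, (n - r ^ 3 + u * r ^ 2) / r, n))"
proof (rule sum.reindex_bij_witness[of _ "\<lambda>(u, n). (u, (n - r ^ 3 + u * r ^ 2) / r, n)" "\<lambda>(u, e, n). (u, n)"])
  fix w assume w: "w \<in> {w \<in> cubics. cubic w r = 0}"
  then obtain u e n where w_eq: "w = (u, e, n)" and "e = (n - r ^ 3 + u * r ^ 2) / r"
    using assms by (cases w rule: prod_cases3) (auto simp: cubic_eq_0_iff)
  then show "(case (\<lambda>(u, e, n). (u, n)) w of (u, n) \<Rightarrow> (u, (n - r ^ 3 + u * r ^ 2) / r, n)) = w"
    and "(case (\<lambda>(u, e, n). (u, n)) w of (u, n) \<Rightarrow> g (u, (n - r ^ 3 + u * r ^ 2) / r, n)) = g w"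
    by simp_all
next
  show "(case p of (u, n) \<Rightarrow> (u, (n - r ^ 3 + u * r ^ 2) / r, n)) \<in> {w \<in> cubics. cubic w r = 0}"
    if "p \<in> Fq m \<times> Fq_star" for p
    using that assms by (auto simp: cubics_def cubic_eq_0_iff intro!: Fq_divide Fq_add Fq_diff Fq_mult Fq_power)
qed (auto simp: cubics_def)

lemma card_cubics_through:
  assumes "r \<in> Fq_star"
  shows "card {w \<in> cubics. cubic w r = 0} = q * (q - 1)"
  using sum_over_cubics_through[OF assms, of "\<lambda>_. 1 :: nat"]
  by (simp add: card_cartesian_product card_Fq card_Fq_star)

lemma sum_weight_cubics_through:
  assumes r: "r \<in> Fq_star"
  shows "(\<Sum>w\<in>{w \<in> cubics. cubic w r = 0}. weight w) = of_nat q * psi m (r + a / r)"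
proof -
  have ar: "a * r \<in> Fq_star"
    using r a_in_Fq a_nonzero by (auto intro: Fq_mult)
  have "weight (u, (n - r ^ 3 + u * r ^ 2) / r, n)
      = psi m (r + a / r) * (psi m (u - r) * psi m (a * r * (u - r) / n))"
    if "u \<in> Fq m" and "n \<in> Fq_star" for u n
  proof -
    have in_Fq: "r + a / r \<in> Fq m" "u - r \<in> Fq m" "a * r * (u - r) / n \<in> Fq m"
      using that r a_in_Fq by (auto intro!: Fq_add Fq_diff Fq_mult Fq_divide)
    have "weight (u, (n - r ^ 3 + u * r ^ 2) / r, n) = psi m ((r + a / r) + ((u - r) + a * r * (u - r) / n))"
      unfolding weight_def prod.case
      by (rule arg_cong[where f = "psi m"]) (use that r in \<open>simp add: field_simps power2_eq_square power3_eq_cube\<close>)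
    also have "\<dots> = psi m (r + a / r) * (psi m (u - r) * psi m (a * r * (u - r) / n))"
      by (simp only: psi_add[OF in_Fq(1) Fq_add[OF in_Fq(2,3)]] psi_add[OF in_Fq(2,3)])
    finally show ?thesis .
  qed
  then have "(\<Sum>w\<in>{w \<in> cubics. cubic w r = 0}. weight w)
      = (\<Sum>(u, n)\<in>Fq m \<times> Fq_star. psi m (r + a / r) * (psi m (u - r) * psi m (a * r * (u - r) / n)))"
    unfolding sum_over_cubics_through[OF r] by (intro sum.cong refl) auto
  also have "\<dots> = psi m (r + a / r) * (\<Sum>u\<in>Fq m. psi m (u - r) * (\<Sum>n\<in>Fq_star. psi m (a * r * (u - r) / n)))"
    by (simp add: sum.cartesian_product' sum_distrib_left)
  also have "(\<Sum>u\<in>Fq m. psi m (u - r) * (\<Sum>n\<in>Fq_star. psi m (a * r * (u - r) / n)))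
      = (\<Sum>v\<in>Fq m. psi m v * (\<Sum>n\<in>Fq_star. psi m (a * r * v / n)))"
    by (rule sum.reindex_bij_witness[of _ "\<lambda>v. v + r" "\<lambda>u. u - r"]) (use r in \<open>auto intro: Fq_add Fq_diff\<close>)
  also have "\<dots> = of_nat q"
    by (rule sum_psi_times_sum_psi_divide[OF ar])
  finally show ?thesis
    by (simp add: mult.commute)
qed

lemma cubics_through_0: "{w \<in> cubics. cubic w 0 = 0} = {}"
  by (auto simp: cubics_def cubic_def split: prod.splits)

lemma sum_Fq_roots_eq:
  "(\<Sum>w\<in>cubics. \<Sum>r\<in>Fq_roots w. g w) = (\<Sum>r\<in>Fq_star. \<Sum>w\<in>{w \<in> cubics. cubic w r = 0}. g w)"
proof -
  have "(\<Sum>w\<in>cubics. \<Sum>r\<in>Fq_roots w. g w) = (\<Sum>r\<in>Fq m. \<Sum>w\<in>{w \<in> cubics. cubic w r = 0}. g w)"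
    unfolding Fq_roots_def by (rule sum.swap_restrict) simp_all
  also have "\<dots> = (\<Sum>r\<in>Fq_star. \<Sum>w\<in>{w \<in> cubics. cubic w r = 0}. g w)"
    by (rule sum.mono_neutral_right) (auto simp: cubics_through_0)
  finally show ?thesis .
qed

lemma sum_card_Fq_roots_weight:
  "(\<Sum>w\<in>cubics. of_nat (card (Fq_roots w)) * weight w) = of_nat q * Kl_star"
  using sum_Fq_roots_eq[of weight]
  by (simp add: sum_weight_cubics_through Kl_star_def sum_distrib_left)

lemma sum_card_Fq_roots: "(\<Sum>w\<in>cubics. card (Fq_roots w)) = (q - 1) * (q * (q - 1))"
  using sum_Fq_roots_eq[of "\<lambda>_. 1 :: nat"] by (simp add: card_cubics_through card_Fq_star)

lemma sum_card_root_triples: "(\<Sum>w\<in>cubics. card (root_triples w)) = (q - 1) ^ 3"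
proof -
  have "(\<Sum>w\<in>cubics. card (root_triples w)) = card (Fq_star \<times> Fq_star \<times> Fq_star)"
    unfolding root_triples_def
    by (rule card_eq_sum_card_fibres[symmetric]) (auto intro: elem_sym_in_cubics)
  then show ?thesis
    by (simp add: card_cartesian_product card_Fq_star power3_eq_cube)
qed

lemma sum_card_conj_points: "(\<Sum>w\<in>cubics. card (conj_points w)) = q ^ 3 - 1"
proof -
  have "(\<Sum>w\<in>cubics. card (conj_points w)) = card (UNIV - {0 :: 'a})"
    unfolding conj_points_def
    by (rule card_eq_sum_card_fibres[symmetric]) (auto intro: conj_coeffs_in_cubics)
  then show ?thesis
    using card_UNIV by (simp add: card_Diff_singleton power_mult mult.commute[of 3 m])
qed

lemma card_conj_points_le: "card (conj_points w) \<le> 3"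
proof (cases "conj_points w = {}")
  case False
  then obtain t0 where t0: "t0 \<in> conj_points w"
    by blast
  have "conj_points w \<subseteq> {t0, t0 ^ q, t0 ^ q ^ 2}"
  proof
    fix t assume t: "t \<in> conj_points w"
    then have "cubic w t = 0"
      using cubic_conj_coeffs[of t t] by (simp add: conj_points_def)
    then show "t \<in> {t0, t0 ^ q, t0 ^ q ^ 2}"
      using t0 cubic_conj_coeffs[of t0 t] by (auto simp: conj_points_def)
  qed
  then have "card (conj_points w) \<le> card {t0, t0 ^ q, t0 ^ q ^ 2}"
    by (rule card_mono[rotated]) simp
  also have "\<dots> \<le> 3"
    by (simp add: card_insert_if)
  finally show ?thesis .
qed simp

lemma conj_point_eq_Fq_root:
  assumes t: "t \<in> conj_points w" and r: "r \<in> Fq_roots w"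
  shows "t = r"
proof -
  have "r \<in> {t, t ^ q, t ^ q ^ 2}"
    using assms cubic_conj_coeffs[of t r] by (auto simp: conj_points_def Fq_roots_def)
  moreover have "r ^ q = r" and "r ^ q ^ 2 = r"
    using r Fq_power_q_power[of r 2] by (auto simp: Fq_roots_def mem_Fq_iff)
  moreover have "(t ^ q) ^ q ^ 2 = t"
    using power_q_cube[of t] by (simp add: power2_eq_square power3_eq_cube mult.assoc flip: power_mult)
  ultimately show ?thesis
    using power_q_square_power_q[of t] by auto
qed

lemma card_bound_with_conj_point:
  assumes "t0 \<in> conj_points w" and "r \<in> Fq_roots w"
  shows "card (conj_points w) + 3 * card (Fq_roots w) \<le> card (root_triples w) + 3"
proof -
  have "conj_points w \<subseteq> {r}"
    using conj_point_eq_Fq_root assms(2) by blast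
  then have "card (conj_points w) \<le> 1"
    using card_mono[of "{r}" "conj_points w"] by simp
  moreover have "Fq_roots w = {r}"
    using conj_point_eq_Fq_root[OF assms(1)] assms(2) by blast
  moreover have "(r, r, r) \<in> root_triples w"
  proof -
    have "r \<in> Fq m" "r \<noteq> 0" "conj_coeffs r = w"
      using assms conj_point_eq_Fq_root[OF assms] by (auto simp: conj_points_def Fq_roots_def)
    moreover have "r ^ q = r" "r ^ q ^ 2 = r"
      using \<open>r \<in> Fq m\<close> Fq_power_q_power[of r 2] by (auto simp: mem_Fq_iff)
    ultimately show ?thesis
      by (simp add: root_triples_def conj_coeffs_def)
  qed
  then have "1 \<le> card (root_triples w)"
    by (metis One_nat_def Suc_leI card_gt_0_iff empty_iff finite)
  ultimately show ?thesis
    by simp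
qed

lemma card_bound_with_two_Fq_roots:
  assumes w: "w \<in> cubics" and r1: "r1 \<in> Fq_roots w" and r2: "r2 \<in> Fq_roots w" and "r1 \<noteq> r2"
  shows "3 * card (Fq_roots w) \<le> card (root_triples w) + 3"
proof -
  define s where "s = fst w - r1 - r2"
  have w_eq: "w = elem_sym (r1, r2, s)"
    unfolding s_def using r1 r2 \<open>r1 \<noteq> r2\<close> by (intro elem_sym_of_two_roots) (auto simp: Fq_roots_def)
  have in_Fq: "r1 \<in> Fq m" "r2 \<in> Fq m" "s \<in> Fq m"
    using w r1 r2 by (auto simp: s_def Fq_roots_def cubics_def intro!: Fq_diff)
  moreover have "r1 * r2 * s \<noteq> 0"
    using w by (simp add: w_eq cubics_def elem_sym_def)
  ultimately have in_Fq_star: "r1 \<in> Fq_star" "r2 \<in> Fq_star" "s \<in> Fq_star"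
    by auto
  have "Fq_roots w = {r1, r2, s}"
    using in_Fq by (auto simp: Fq_roots_def w_eq cubic_eq_0_iff_elem_sym)
  moreover have "{(r1, r2, s), (r2, s, r1), (s, r1, r2), (r2, r1, s), (r1, s, r2), (s, r2, r1)} \<subseteq> root_triples w"
    using in_Fq_star by (auto simp: root_triples_def w_eq elem_sym_def algebra_simps)
  then have "card {(r1, r2, s), (r2, s, r1), (s, r1, r2), (r2, r1, s), (r1, s, r2), (s, r2, r1)}
      \<le> card (root_triples w)"
    by (rule card_mono[rotated]) simp
  ultimately show ?thesis
    using card_permutations_ge[OF \<open>r1 \<noteq> r2\<close>, of s] by simp
qed

lemma card_conj_points_Fq_roots_le:
  assumes "w \<in> cubics"
  shows "card (conj_points w) + 3 * card (Fq_roots w) \<le> card (root_triples w) + 3"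
proof (cases "Fq_roots w = {}")
  case True
  then show ?thesis
    using card_conj_points_le[of w] by simp
next
  case False
  then obtain r where r: "r \<in> Fq_roots w"
    by blast
  show ?thesis
  proof (cases "conj_points w = {}")
    case False
    then show ?thesis
      using card_bound_with_conj_point r by blast
  next
    case no_conj: True
    show ?thesis
    proof (cases "Fq_roots w = {r}")
      case True
      with no_conj show ?thesis
        by simp
    next
      case False
      then obtain r' where "r' \<in> Fq_roots w" "r \<noteq> r'"
        using r by blast
      with card_bound_with_two_Fq_roots[OF assms r] no_conj show ?thesis
        by simp
    qed
  qed
qed

text \<open>Summed over all cubics the two sides of this bound agree (both totals are q^3 - 1 + 3q(q - 1)^2),
  so it is an equality for every cubic. This avoids classifying the cubics with an irreducible
  quadratic factor.\<close>

lemma card_conj_points_Fq_roots_eq: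
  assumes "w \<in> cubics"
  shows "card (conj_points w) + 3 * card (Fq_roots w) = card (root_triples w) + 3"
proof (rule sum_mono_eq_imp_eq[where f = "\<lambda>w. card (conj_points w) + 3 * card (Fq_roots w)"
    and g = "\<lambda>w. card (root_triples w) + 3", OF finite_cubics card_conj_points_Fq_roots_le _ assms])
  have "(\<Sum>w\<in>cubics. card (conj_points w) + 3 * card (Fq_roots w))
      = (q ^ 3 - 1) + 3 * ((q - 1) * (q * (q - 1)))"
    by (simp add: sum.distrib sum_card_conj_points sum_card_Fq_roots flip: sum_distrib_left)
  also have "\<dots> = (q - 1) ^ 3 + 3 * (q * (q * (q - 1)))"
    using q_ge_9 by (intro cubic_count_identity) simp
  also have "\<dots> = (\<Sum>w\<in>cubics. card (root_triples w) + 3)"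
    by (simp add: sum.distrib sum_card_root_triples card_cubics)
  finally show "(\<Sum>w\<in>cubics. card (conj_points w) + 3 * card (Fq_roots w))
      = (\<Sum>w\<in>cubics. card (root_triples w) + 3)" .
qed

lemma Kl3_star_eq: "Kl3_star = Kl_star ^ 3 - 3 * of_nat q * Kl_star"
proof -
  have "Kl3_star = (\<Sum>w\<in>cubics. of_nat (card (root_triples w)) * weight w + 3 * weight w
      - 3 * (of_nat (card (Fq_roots w)) * weight w))"
    unfolding Kl3_star_eq_sum
  proof (intro sum.cong refl)
    fix w assume "w \<in> cubics"
    then have "(of_nat (card (conj_points w)) :: complex) + 3 * of_nat (card (Fq_roots w))
        = of_nat (card (root_triples w)) + 3"
      using arg_cong[OF card_conj_points_Fq_roots_eq, of w "of_nat :: nat \<Rightarrow> complex"] by simp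
    then have "(of_nat (card (conj_points w)) + 3 * of_nat (card (Fq_roots w))) * weight w
        = (of_nat (card (root_triples w)) + 3) * weight w"
      by (simp only:)
    then show "of_nat (card (conj_points w)) * weight w = of_nat (card (root_triples w)) * weight w
        + 3 * weight w - 3 * (of_nat (card (Fq_roots w)) * weight w)"
      by (simp add: algebra_simps)
  qed
  also have "\<dots> = Kl_star ^ 3 + 3 * (\<Sum>w\<in>cubics. weight w) - 3 * (of_nat q * Kl_star)"
    by (simp add: sum.distrib sum_subtractf Kl_star_cube sum_card_Fq_roots_weight flip: sum_distrib_left)
  finally show ?thesis
    by (simp add: sum_weight_cubics)
qed

lemma Kl3_eq_Kl: "Kl3 m a = 1 + (Kl m a - 1) ^ 3 - 3 * of_nat q * (Kl m a - 1)"
  using Kl3_eq_1_plus Kl3_star_eq Kl_eq_1_plus by simp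

definition trace_count :: "'a \<Rightarrow> nat" where
  "trace_count s = card {x \<in> Fq m. abs_tr m (x + a / x) = s}"

lemma Kl_eq_trace_counts:
  "Kl m a = of_nat (trace_count 0) + of_nat (trace_count 1) * omega + of_nat (trace_count (-1)) * omega ^ 2"
proof -
  have "Kl m a = (\<Sum>s\<in>{0, 1, -1}. of_nat (trace_count s) * chi3 s)"
    unfolding Kl_eq_sum_psi psi_def trace_count_def
    by (rule sum_comp_eq_sum_card_fibres)
      (auto intro!: abs_tr_Fq_in_prime_field Fq_add Fq_divide a_in_Fq)
  then show ?thesis
    using one_neq_minus_one[OF CHAR_eq_3]
    by (simp add: chi3_0[OF CHAR_eq_3] chi3_1[OF CHAR_eq_3] chi3_minus_1[OF CHAR_eq_3])
qed

lemma trace_count_minus_1: "trace_count (-1) = trace_count 1"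
proof -
  let ?S = "\<lambda>s. {x \<in> Fq m. abs_tr m (x + a / x) = s}"
  have odd: "abs_tr m (- x + a / - x) = - abs_tr m (x + a / x)" for x :: 'a
    using abs_tr_minus[OF CHAR_eq_3, of m "x + a / x"] by simp
  have "uminus ` ?S 1 = ?S (-1)"
  proof (intro equalityI subsetI)
    fix y assume "y \<in> uminus ` ?S 1"
    then obtain x where "x \<in> ?S 1" and "y = - x"
      by blast
    then show "y \<in> ?S (-1)"
      using odd[of x] by (simp add: Fq_uminus)
  next
    fix x assume "x \<in> ?S (-1)"
    then have "- x \<in> ?S 1"
      using odd[of x] by (simp add: Fq_uminus)
    then show "x \<in> uminus ` ?S 1"
      by (rule rev_image_eqI) simp
  qed
  then show ?thesis
    unfolding trace_count_def using card_image[of uminus "?S 1"] by simp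
qed

lemma sum_trace_counts: "trace_count 0 + trace_count 1 + trace_count (-1) = q"
proof -
  have "card (Fq m :: 'a set) = (\<Sum>s\<in>{0, 1, -1}. trace_count s)"
    unfolding trace_count_def
    by (rule card_eq_sum_card_fibres) (auto intro!: abs_tr_Fq_in_prime_field Fq_add Fq_divide a_in_Fq)
  then show ?thesis
    using one_neq_minus_one[OF CHAR_eq_3] by (simp add: card_Fq)
qed

lemma trace_count_0_less: "trace_count 0 < q"
proof -
  let ?K = "{y :: 'a. abs_tr m y = 0}"
  let ?S = "\<Union>y\<in>?K. {x. x \<noteq> 0 \<and> x + a / x = y}"
  have "trace_count 0 \<le> card (insert 0 ?S)"
    unfolding trace_count_def by (rule card_mono) auto
  also have "\<dots> \<le> Suc (card ?S)"
    by (simp add: card_insert_if)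
  also have "card ?S \<le> (\<Sum>y\<in>?K. card {x. x \<noteq> 0 \<and> x + a / x = y})"
    by (rule card_UN_le) simp
  also have "\<dots> \<le> (\<Sum>y\<in>?K. 2)"
    by (intro sum_mono card_nonzero_solutions_add_divide_le)
  also have "\<dots> \<le> 2 * 3 ^ (m - 1)"
    using card_abs_tr_kernel_le[of m, where 'a = 'a] m_ge_2 by simp
  finally have "trace_count 0 \<le> 1 + 2 * 3 ^ (m - 1)"
    by simp
  moreover have "1 < (3 :: nat) ^ (m - 1)"
    using m_ge_2 by (intro one_less_power) auto
  moreover have "q = 3 * 3 ^ (m - 1)"
    using m_ge_2 by (cases m) simp_all
  ultimately show ?thesis
    by linarith
qed

lemma Kl_eq_of_int: "\<exists>k. Kl m a = of_int k \<and> 3 dvd k \<and> \<bar>k\<bar> < 3 ^ m"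
proof -
  define N0 N1 where "N0 = int (trace_count 0)" and "N1 = int (trace_count 1)"
  have "omega + omega ^ 2 = -1"
    using omega_sum_eq_0 by (simp add: add.assoc add_eq_0_iff)
  moreover have "Kl m a = of_nat (trace_count 0) + of_nat (trace_count 1) * (omega + omega ^ 2)"
    using Kl_eq_trace_counts trace_count_minus_1 by (simp add: distrib_left)
  ultimately have "Kl m a = of_int (N0 - N1)"
    by (simp add: N0_def N1_def)
  moreover have total: "N0 + 2 * N1 = 3 ^ m"
  proof -
    have "trace_count 0 + 2 * trace_count 1 = q"
      using sum_trace_counts trace_count_minus_1 by simp
    then show ?thesis
      unfolding N0_def N1_def using arg_cong[of _ _ int] by fastforce
  qed
  moreover have "N0 < 3 ^ m"
    using trace_count_0_less unfolding N0_def by (metis of_nat_less_iff of_nat_numeral of_nat_power)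
  moreover have "3 dvd N0 - N1"
  proof -
    have "(3 :: int) ^ m = 3 * 3 ^ (m - 1)"
      using m_ge_2 by (cases m) simp_all
    with total have "N0 - N1 = 3 * (3 ^ (m - 1) - N1)"
      unfolding right_diff_distrib by linarith
    then show ?thesis
      by (rule dvdI)
  qed
  moreover have "0 \<le> N0" and "0 \<le> N1"
    by (simp_all add: N0_def N1_def)
  ultimately show ?thesis
    by (intro exI[of _ "N0 - N1"]) auto
qed

end

theorem mainTheorem6:
  fixes a :: "'a::{field,finite}" and m :: nat
  assumes "card (UNIV :: 'a set) = 3 ^ (3 * m)"
    and "m \<ge> 2"
    and "a \<in> Fq m"
    and "a \<noteq> 0"
  shows "H3 m a = H m a + 1"
proof -
  interpret kloosterman m a
    using assms by unfold_locales
  obtain k where Kl: "Kl m a = of_int k" and "3 dvd k" and "\<bar>k\<bar> < 3 ^ m"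
    using Kl_eq_of_int by blast
  moreover have "Kl3 m a = of_int (1 + (k - 1) ^ 3 - 3 * 3 ^ m * (k - 1))"
    using Kl3_eq_Kl by (simp add: Kl)
  ultimately show ?thesis
    by (rule H3_eq_H_plus_1_of_int)
qed

end
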